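(* Assume (A1), (A2), (A3). The function $f$ is $\mathcal C^2$ on $(0,R_1)$, with right derivative $f'_+(0)=1$ and left derivative $f'_-(R_1)>0$, and $f$ is constant on $[R_1,\infty)$. Moreover $f$ is non-negative, non-decreasing and concave, and for all $s\ge0$, \[\min(s,R_1)\,f'_-(R_1)\le f(s)\le\min(s,f(R_1))\le\min(s,R_1).\]
   Context: $U,W\in\mathcal C^1(\mathbb R^d)$. (A1): $U\ge0$ and there exist $\lambda>0$, $A\ge0$ with $\tfrac12\nabla U(x)\cdot x\ge\lambda(U(x)+|x|^2/4)-A$ for all $x$. (A2): $\nabla U$ is $L_U$-Lipschitz, $L_U>0$. (A3): $W$ even, $\nabla W$ is $L_W$-Lipschitz, $L_W<\lambda/8$. Fix $\tilde A\ge0$ with $U(x)\ge\frac\lambda6|x|^2-\tilde A$ for all $x$. Set $\gamma=\frac{\lambda}{2(\lambda+1)}$, $B=24(A+(\lambda-\gamma)\tilde A+d)$, $\alpha=L_U+\frac\lambda4$, $R_1=\sqrt{\frac{24((1+\alpha)^2+\alpha^2)}{5\gamma\min(3,\lambda/3)}B}$, $\kappa_0=\frac{L_U+L_W}\alpha+\alpha+96\max(\frac1{2\alpha},1)$, \[c=\min\Big\{\frac\gamma{36},\ \frac B3,\ \frac17\min\Big(\frac12-\frac{L_U+L_W}{2\alpha},\,2\sqrt{\tfrac{L_U+L_W}{2\pi\alpha}}\Big)\exp\Big(-\tfrac18\kappa_0R_1^2\Big)\Big\},\] $\epsilon=3c/B$, $\mathbf C=c+2\epsilon B$, and for $s\ge0$: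 $\phi(s)=\exp\big(-\frac18\big(\frac{L_U+L_W}\alpha+\alpha+96\epsilon\max(\frac1{2\alpha},1)\big)s^2\big)$, $\Phi(s)=\int_0^s\phi(u)du$, $g(s)=1-\frac{\mathbf C}4\int_0^s\frac{\Phi(u)}{\phi(u)}du$, $f(s)=\int_0^{\min(s,R_1)}\phi(u)g(u)du$. *)

theory Defs
  imports "HOL-Analysis.Analysis"
begin

definition gam :: "real \<Rightarrow> real" where
  "gam lam = lam / (2 * (lam + 1))"

definition Bc :: "real \<Rightarrow> real \<Rightarrow> real \<Rightarrow> nat \<Rightarrow> real" where
  "Bc lam A At d = 24 * (A + (lam - gam lam) * At + real d)"

definition alph :: "real \<Rightarrow> real \<Rightarrow> real" where
  "alph lam LU = LU + lam / 4"

definition R1 :: "real \<Rightarrow> real \<Rightarrow> real \<Rightarrow> real \<Rightarrow> nat \<Rightarrow> real" where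
  "R1 lam A At LU d =
     sqrt (24 * ((1 + alph lam LU)^2 + (alph lam LU)^2)
           / (5 * gam lam * min 3 (lam / 3)) * Bc lam A At d)"

definition kappa0 :: "real \<Rightarrow> real \<Rightarrow> real \<Rightarrow> real" where
  "kappa0 lam LU LW = (LU + LW) / alph lam LU + alph lam LU
                      + 96 * max (1 / (2 * alph lam LU)) 1"

definition cc :: "real \<Rightarrow> real \<Rightarrow> real \<Rightarrow> real \<Rightarrow> real \<Rightarrow> nat \<Rightarrow> real" where
  "cc lam A At LU LW d = min (gam lam / 36) (min (Bc lam A At d / 3)
     (1/7 * min (1/2 - (LU + LW) / (2 * alph lam LU))
                (2 * sqrt ((LU + LW) / (2 * pi * alph lam LU)))
      * exp (- (1/8) * kappa0 lam LU LW * (R1 lam A At LU d)^2)))"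

definition eps :: "real \<Rightarrow> real \<Rightarrow> real \<Rightarrow> real \<Rightarrow> real \<Rightarrow> nat \<Rightarrow> real" where
  "eps lam A At LU LW d = 3 * cc lam A At LU LW d / Bc lam A At d"

definition CC :: "real \<Rightarrow> real \<Rightarrow> real \<Rightarrow> real \<Rightarrow> real \<Rightarrow> nat \<Rightarrow> real" where
  "CC lam A At LU LW d = cc lam A At LU LW d + 2 * eps lam A At LU LW d * Bc lam A At d"

definition phi :: "real \<Rightarrow> real \<Rightarrow> real \<Rightarrow> real \<Rightarrow> real \<Rightarrow> nat \<Rightarrow> real \<Rightarrow> real" where
  "phi lam A At LU LW d s = exp (- (1/8) * ((LU + LW) / alph lam LU + alph lam LU
      + 96 * eps lam A At LU LW d * max (1 / (2 * alph lam LU)) 1) * s^2)"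

definition Phi :: "real \<Rightarrow> real \<Rightarrow> real \<Rightarrow> real \<Rightarrow> real \<Rightarrow> nat \<Rightarrow> real \<Rightarrow> real" where
  "Phi lam A At LU LW d s = integral {0..s} (phi lam A At LU LW d)"

definition gfun :: "real \<Rightarrow> real \<Rightarrow> real \<Rightarrow> real \<Rightarrow> real \<Rightarrow> nat \<Rightarrow> real \<Rightarrow> real" where
  "gfun lam A At LU LW d s = 1 - CC lam A At LU LW d / 4 *
      integral {0..s} (\<lambda>u. Phi lam A At LU LW d u / phi lam A At LU LW d u)"

definition ffun :: "real \<Rightarrow> real \<Rightarrow> real \<Rightarrow> real \<Rightarrow> real \<Rightarrow> nat \<Rightarrow> real \<Rightarrow> real" where
  "ffun lam A At LU LW d s = integral {0..min s (R1 lam A At LU d)}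
      (\<lambda>u. phi lam A At LU LW d u * gfun lam A At LU LW d u)"

end

theory Submission
  imports Defs
begin

(* f integrates psi = phi * g up to min s R1. The Gaussian phi is positive and decreasing, and
   g decreases from g 0 = 1; since Phi u / phi u <= R1 / phi R1 on [0, R1], g stays positive up
   to R1 as soon as C R1^2 < 4 phi R1, and that is what the exponential factor in c guarantees.
   So psi decreases from 1 to psi R1 > 0 on [0, R1]: f is concave there with slopes between
   psi R1 and 1, and constant beyond R1. The hypotheses on U and W enter only through
   LW >= 0 (from the Lipschitz bound) and LW < lam / 8. *)

lemma integral_has_real_derivative_at:
  assumes "continuous_on {a..b} h" "a < x" "x < b"
  shows "((\<lambda>t. integral {a..t} h) has_real_derivative h x) (at x)"
  using integral_has_real_derivative[OF assms(1), of x] assms by (simp add: at_within_Icc_at)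

lemma mono_on_integral_nonneg:
  fixes h :: "real \<Rightarrow> real"
  assumes "h integrable_on {a..b}" "\<And>u. u \<in> {a..b} \<Longrightarrow> 0 \<le> h u"
  shows "mono_on {a..b} (\<lambda>t. integral {a..t} h)"
proof (rule mono_onI)
  fix s t assume "s \<in> {a..b}" "t \<in> {a..b}" "s \<le> t"
  then show "integral {a..s} h \<le> integral {a..t} h"
    using assms by (intro integral_subset_le integrable_on_subinterval[OF assms(1)]) auto
qed

lemma concave_on_integral_antimono:
  fixes h :: "real \<Rightarrow> real"
  assumes int: "h integrable_on {a..b}" and anti: "antimono_on {a..b} h"
  shows "concave_on {a..b} (\<lambda>t. integral {a..t} h)"
proof (rule concave_on_linorderI)
  fix t x y :: real
  assume t: "0 < t" "t < 1" and xy: "x \<in> {a..b}" "y \<in> {a..b}" "x < y"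
  define z where "z = (1 - t) *\<^sub>R x + t *\<^sub>R y"
  have zx: "z - x = t * (y - x)" and yz: "y - z = (1 - t) * (y - x)"
    by (simp_all add: z_def algebra_simps)
  have "0 \<le> t * (y - x)" "0 \<le> (1 - t) * (y - x)"
    using t xy by auto
  then have z: "x \<le> z" "z \<le> y"
    unfolding zx[symmetric] yz[symmetric] by auto
  have balance: "(1 - t) * (z - x) = t * (y - z)"
    unfolding zx yz by simp
  have sub: "h integrable_on {p..q}" if "a \<le> p" "q \<le> b" for p q
    using that by (intro integrable_on_subinterval[OF int]) auto
  have split_z: "integral {a..z} h = integral {a..x} h + integral {x..z} h"
    using xy z by (intro Henstock_Kurzweil_Integration.integral_combine[symmetric] sub) auto
  have split_y: "integral {a..y} h = integral {a..z} h + integral {z..y} h"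
    using xy z by (intro Henstock_Kurzweil_Integration.integral_combine[symmetric] sub) auto
  have "integral {x..z} (\<lambda>_. h z) \<le> integral {x..z} h"
    using xy z by (intro integral_le sub monotone_onD[OF anti]) auto
  then have "(z - x) * h z \<le> integral {x..z} h"
    using z by simp
  then have left: "(1 - t) * ((z - x) * h z) \<le> (1 - t) * integral {x..z} h"
    using t by (intro mult_left_mono) auto
  have "integral {z..y} h \<le> integral {z..y} (\<lambda>_. h z)"
    using xy z by (intro integral_le sub monotone_onD[OF anti]) auto
  then have "integral {z..y} h \<le> (y - z) * h z"
    using z by simp
  then have right: "t * integral {z..y} h \<le> t * ((y - z) * h z)"
    using t by (intro mult_left_mono) auto
  have "(1 - t) * ((z - x) * h z) = t * ((y - z) * h z)"
    using balance by simp
  then show "(1 - t) * integral {a..x} h + t * integral {a..y} h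
      \<le> integral {a..(1 - t) *\<^sub>R x + t *\<^sub>R y} h"
    using left right unfolding z_def[symmetric] split_y split_z by (simp add: algebra_simps)
qed simp

lemma concave_on_compose_mono:
  fixes f :: "'a::real_vector \<Rightarrow> real"
  assumes f: "concave_on S f" and g: "concave_on T g" "mono_on T g" and range: "f ` S \<subseteq> T"
  shows "concave_on S (\<lambda>x. g (f x))"
  unfolding concave_on_iff
proof (intro conjI ballI allI impI)
  show "convex S" using concave_on_imp_convex[OF f] .
  fix x y :: 'a and u v :: real
  assume xy: "x \<in> S" "y \<in> S" and uv: "0 \<le> u" "0 \<le> v" "u + v = 1"
  have xy': "u *\<^sub>R x + v *\<^sub>R y \<in> S"
    using \<open>convex S\<close> xy uv by (rule convexD)
  have comb: "u * f x + v * f y \<in> T"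
    using convexD[OF concave_on_imp_convex[OF g(1)], of "f x" "f y"] range xy uv by auto
  have "u * g (f x) + v * g (f y) \<le> g (u * f x + v * f y)"
    using g(1) range xy uv by (simp add: concave_on_iff image_subset_iff)
  also have "\<dots> \<le> g (f (u *\<^sub>R x + v *\<^sub>R y))"
  proof (rule monotone_onD[OF g(2) comb])
    show "f (u *\<^sub>R x + v *\<^sub>R y) \<in> T" using range xy' by auto
    show "u * f x + v * f y \<le> f (u *\<^sub>R x + v *\<^sub>R y)"
      using f xy uv by (simp add: concave_on_iff)
  qed
  finally show "u * g (f x) + v * g (f y) \<le> g (f (u *\<^sub>R x + v *\<^sub>R y))" .
qed

lemma concave_on_min_const: "convex S \<Longrightarrow> concave_on S (\<lambda>x::real. min x c)"
  unfolding concave_on_iff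
proof (intro conjI ballI allI impI)
  fix x y u v :: real
  assume uv: "0 \<le> u" "0 \<le> v" "u + v = 1"
  have "u * min x c + v * min y c \<le> u * x + v * y"
    using uv by (intro add_mono mult_left_mono) auto
  moreover have "u * min x c + v * min y c \<le> u * c + v * c"
    using uv by (intro add_mono mult_left_mono) auto
  ultimately show "u * min x c + v * min y c \<le> min (u *\<^sub>R x + v *\<^sub>R y) c"
    using uv by (simp add: distrib_right[symmetric])
qed

locale antitone_profile =
  fixes h :: "real \<Rightarrow> real" and R :: real
  assumes R_pos: "0 < R"
    and h_continuous: "continuous_on {0..R} h"
    and h_antimono: "antimono_on {0..R} h"
    and h_0: "h 0 = 1"
    and h_R_pos: "0 < h R"
begin

definition F :: "real \<Rightarrow> real" where
  "F s = integral {0..min s R} h"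

lemma h_integrable: "h integrable_on {0..R}"
  using h_continuous by (rule integrable_continuous_interval)

lemma h_ge_h_R: "x \<in> {0..R} \<Longrightarrow> h R \<le> h x"
  using h_antimono R_pos by (auto intro: monotone_onD)

lemma h_le_1: "x \<in> {0..R} \<Longrightarrow> h x \<le> 1"
  using h_antimono R_pos h_0 by (auto dest: monotone_onD[of _ _ _ _ 0 x])

lemma F_eq_integral: "s \<in> {0..R} \<Longrightarrow> F s = integral {0..s} h"
  by (simp add: F_def)

lemma F_const: "R \<le> s \<Longrightarrow> F s = F R"
  by (simp add: F_def)

lemma mono_on_integral_upto: "mono_on {0..R} (\<lambda>t. integral {0..t} h)"
  using h_integrable h_ge_h_R h_R_pos
    by (intro mono_on_integral_nonneg) (auto intro: less_imp_le order.trans)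

lemma F_mono: "mono_on {0..} F"
proof (rule mono_onI)
  fix s t :: real assume "s \<in> {0..}" "t \<in> {0..}" "s \<le> t"
  then show "F s \<le> F t"
    unfolding F_def using R_pos by (intro monotone_onD[OF mono_on_integral_upto]) auto
qed

lemma F_concave: "concave_on {0..} F"
  unfolding F_def[abs_def]
proof (rule concave_on_compose_mono[where f="\<lambda>s. min s R"])
  show "concave_on {0..} (\<lambda>s. min s R)" by (rule concave_on_min_const) simp
  show "concave_on {0..R} (\<lambda>t. integral {0..t} h)"
    using h_integrable h_antimono by (rule concave_on_integral_antimono)
  show "mono_on {0..R} (\<lambda>t. integral {0..t} h)" by (rule mono_on_integral_upto)
  show "(\<lambda>s. min s R) ` {0..} \<subseteq> {0..R}" using R_pos by auto
qed

lemma F_bounds: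
  assumes "0 \<le> s"
  shows "min s R * h R \<le> F s" "F s \<le> min s R"
proof -
  define t where "t = min s R"
  have t: "t \<in> {0..R}" using assms R_pos by (auto simp: t_def)
  have int: "h integrable_on {0..t}"
    using t by (intro integrable_on_subinterval[OF h_integrable]) auto
  have "integral {0..t} (\<lambda>_. h R) \<le> integral {0..t} h"
    using t int h_ge_h_R by (intro integral_le) auto
  then show "min s R * h R \<le> F s" using t by (simp add: F_def t_def[symmetric])
  have "integral {0..t} h \<le> integral {0..t} (\<lambda>_. 1)"
    using t int h_le_1 by (intro integral_le) auto
  then show "F s \<le> min s R" using t by (simp add: F_def t_def[symmetric])
qed

lemma F_nonneg: "0 \<le> s \<Longrightarrow> 0 \<le> F s"
proof -
  assume "0 \<le> s"
  then have "0 \<le> min s R * h R"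
    using R_pos h_R_pos by simp
  then show ?thesis
    using F_bounds(1)[OF \<open>0 \<le> s\<close>] by linarith
qed

lemma F_le_min_F_R: "0 \<le> s \<Longrightarrow> F s \<le> min s (F R)"
  using F_bounds(2)[of s] monotone_onD[OF F_mono, of s R] F_const[of s] R_pos
  by (cases "s \<le> R") auto

lemma F_has_derivative_within:
  assumes "x \<in> {0..R}"
  shows "(F has_real_derivative h x) (at x within {0..R})"
proof (rule has_field_derivative_transform_within[where d=1])
  show "((\<lambda>t. integral {0..t} h) has_real_derivative h x) (at x within {0..R})"
    using h_continuous assms by (rule integral_has_real_derivative)
qed (use assms in \<open>auto simp: F_eq_integral\<close>)

lemma F_has_derivative_interior: "x \<in> {0<..<R} \<Longrightarrow> (F has_real_derivative h x) (at x)"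
  using F_has_derivative_within[of x] by (simp add: at_within_Icc_at)

lemma F_has_right_derivative_0: "(F has_real_derivative 1) (at_right 0)"
  using F_has_derivative_within[of 0] R_pos by (simp add: h_0 at_within_Icc_at_right)

lemma F_has_left_derivative_R: "(F has_real_derivative h R) (at_left R)"
  using F_has_derivative_within[of R] R_pos by (simp add: at_within_Icc_at_left)

end

locale gaussian_profile =
  fixes k C R :: real
  assumes k_nonneg: "0 \<le> k" and C_nonneg: "0 \<le> C" and R_pos: "0 < R"
    and C_small: "C * R^2 < 4 * exp (- (1/8) * k * R^2)"
begin

definition ph :: "real \<Rightarrow> real" where
  "ph s = exp (- (1/8) * k * s^2)"

definition Ph :: "real \<Rightarrow> real" where
  "Ph s = integral {0..s} ph"

definition g :: "real \<Rightarrow> real" where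
  "g s = 1 - C / 4 * integral {0..s} (\<lambda>u. Ph u / ph u)"

definition psi :: "real \<Rightarrow> real" where
  "psi s = ph s * g s"

definition dpsi :: "real \<Rightarrow> real" where
  "dpsi s = - (k * s / 4) * psi s - C / 4 * Ph s"

lemma ph_pos: "0 < ph s"
  by (simp add: ph_def)

lemma ph_le_1: "ph s \<le> 1"
  using k_nonneg by (simp add: ph_def)

lemma ph_antimono: "antimono_on {0..} ph"
  using k_nonneg by (intro monotone_onI) (simp add: ph_def mult_left_mono power_mono)

lemma ph_continuous: "continuous_on S ph"
  unfolding ph_def[abs_def] by (intro continuous_intros)

lemma ph_has_derivative: "(ph has_real_derivative - (k * x / 4) * ph x) (at x)"
  unfolding ph_def[abs_def] by (auto intro!: derivative_eq_intros simp: algebra_simps)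

lemma Ph_continuous: "continuous_on {0..b} Ph"
  unfolding Ph_def[abs_def]
  by (intro indefinite_integral_continuous_1 integrable_continuous_interval ph_continuous)

lemma Ph_nonneg: "0 \<le> s \<Longrightarrow> 0 \<le> Ph s"
  unfolding Ph_def using ph_pos
  by (intro integral_nonneg integrable_continuous_interval ph_continuous) (auto intro: less_imp_le)

lemma Ph_le: "0 \<le> s \<Longrightarrow> Ph s \<le> s"
  using integral_le[of ph "{0..s}" "\<lambda>_. 1"] ph_le_1
  by (simp add: Ph_def integrable_continuous_interval ph_continuous)

lemma Ph_div_ph_continuous: "continuous_on {0..b} (\<lambda>u. Ph u / ph u)"
  by (intro continuous_intros Ph_continuous ph_continuous) (simp add: ph_def)

lemma Ph_div_ph_integrable: "(\<lambda>u. Ph u / ph u) integrable_on {0..b}"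
  by (intro integrable_continuous_interval Ph_div_ph_continuous)

lemma Ph_div_ph_nonneg: "0 \<le> s \<Longrightarrow> 0 \<le> Ph s / ph s"
  using Ph_nonneg ph_pos by (simp add: less_imp_le)

lemma g_0: "g 0 = 1"
  by (simp add: g_def)

lemma g_continuous: "continuous_on {0..b} g"
  unfolding g_def[abs_def]
  by (intro continuous_intros indefinite_integral_continuous_1 Ph_div_ph_integrable)

lemma g_has_derivative: "0 < x \<Longrightarrow> (g has_real_derivative - C / 4 * (Ph x / ph x)) (at x)"
  unfolding g_def[abs_def]
  by (auto intro!: derivative_eq_intros integral_has_real_derivative_at[where b="x + 1"]
      Ph_div_ph_continuous)

lemma g_antimono: "antimono_on {0..} g"
proof (rule monotone_onI)
  fix x y :: real assume xy: "x \<in> {0..}" "y \<in> {0..}" "x \<le> y"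
  have "mono_on {0..y} (\<lambda>t. integral {0..t} (\<lambda>u. Ph u / ph u))"
    by (intro mono_on_integral_nonneg Ph_div_ph_integrable Ph_div_ph_nonneg) auto
  then have "integral {0..x} (\<lambda>u. Ph u / ph u) \<le> integral {0..y} (\<lambda>u. Ph u / ph u)"
    using monotone_onD[OF \<open>mono_on {0..y} _\<close>, of x y] xy by simp
  then show "g y \<le> g x"
    using C_nonneg by (auto simp: g_def intro!: mult_left_mono)
qed

lemma g_R_pos: "0 < g R"
proof -
  have "integral {0..R} (\<lambda>u. Ph u / ph u) \<le> integral {0..R} (\<lambda>_. R / ph R)"
  proof (intro integral_le Ph_div_ph_integrable)
    fix u assume u: "u \<in> {0..R}"
    then have "Ph u \<le> R" "ph R \<le> ph u"
      using Ph_le[of u] monotone_onD[OF ph_antimono, of u R] by auto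
    then show "Ph u / ph u \<le> R / ph R"
      using Ph_nonneg[of u] u ph_pos by (intro frac_le) auto
  qed auto
  also have "\<dots> = R^2 / ph R"
    using R_pos by (simp add: power2_eq_square)
  finally have "C / 4 * integral {0..R} (\<lambda>u. Ph u / ph u) \<le> C / 4 * (R^2 / ph R)"
    using C_nonneg by (intro mult_left_mono) auto
  also have "\<dots> < 1"
    using C_small ph_pos[of R] by (simp add: ph_def field_simps)
  finally show ?thesis by (simp add: g_def)
qed

lemma g_pos: "x \<in> {0..R} \<Longrightarrow> 0 < g x"
  using monotone_onD[OF g_antimono, of x R] g_R_pos by auto

sublocale antitone_profile psi R
proof
  show "0 < R" by (rule R_pos)
  show "continuous_on {0..R} psi"
    unfolding psi_def[abs_def] by (intro continuous_intros ph_continuous g_continuous)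
  show "antimono_on {0..R} psi"
  proof (rule monotone_onI)
    fix x y assume xy: "x \<in> {0..R}" "y \<in> {0..R}" "x \<le> y"
    then show "psi y \<le> psi x"
      unfolding psi_def using ph_pos g_pos[of y]
      by (intro mult_mono monotone_onD[OF ph_antimono] monotone_onD[OF g_antimono])
        (auto intro: less_imp_le)
  qed
  show "psi 0 = 1" by (simp add: psi_def ph_def g_0)
  show "0 < psi R" using ph_pos g_R_pos by (simp add: psi_def)
qed

lemma psi_has_derivative: "0 < x \<Longrightarrow> (psi has_real_derivative dpsi x) (at x)"
  unfolding psi_def[abs_def]
  by (rule derivative_eq_intros ph_has_derivative g_has_derivative | assumption)+
    (use ph_pos[of x] in \<open>simp add: dpsi_def psi_def field_simps\<close>)

lemma dpsi_continuous: "continuous_on {0<..<R} dpsi"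
proof -
  have "continuous_on {0..R} dpsi"
    unfolding dpsi_def[abs_def] by (intro continuous_intros h_continuous Ph_continuous) auto
  then show ?thesis by (rule continuous_on_subset) auto
qed

end

definition kappa_eps :: "real \<Rightarrow> real \<Rightarrow> real \<Rightarrow> real \<Rightarrow> real \<Rightarrow> nat \<Rightarrow> real" where
  "kappa_eps lam A At LU LW d = (LU + LW) / alph lam LU + alph lam LU
     + 96 * eps lam A At LU LW d * max (1 / (2 * alph lam LU)) 1"

lemma phi_eq_exp: "phi lam A At LU LW d s = exp (- (1/8) * kappa_eps lam A At LU LW d * s^2)"
  by (simp add: phi_def kappa_eps_def)

locale admissible_constants =
  fixes lam A At LU LW :: real and d :: nat
  assumes lam_pos: "0 < lam" and A_nonneg: "0 \<le> A" and At_nonneg: "0 \<le> At"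
    and LU_pos: "0 < LU" and LW_nonneg: "0 \<le> LW" and LW_small: "LW < lam / 8"
    and d_pos: "0 < d"
begin

abbreviation "B \<equiv> Bc lam A At d"
abbreviation "\<alpha> \<equiv> alph lam LU"
abbreviation "R \<equiv> R1 lam A At LU d"
abbreviation "c \<equiv> cc lam A At LU LW d"
abbreviation "\<kappa> \<equiv> kappa_eps lam A At LU LW d"
abbreviation "\<kappa>\<^sub>0 \<equiv> kappa0 lam LU LW"

lemma gam_pos: "0 < gam lam"
  using lam_pos by (simp add: gam_def)

lemma gam_less: "gam lam < lam"
  using lam_pos by (simp add: gam_def field_simps add_pos_pos)

lemma Bc_ge_24: "24 \<le> B"
proof -
  have "0 \<le> (lam - gam lam) * At"
    using gam_less At_nonneg by simp
  then show ?thesis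
    using A_nonneg d_pos by (simp add: Bc_def)
qed

lemma alph_pos: "0 < \<alpha>"
  using lam_pos LU_pos by (simp add: alph_def)

lemma R1_pos: "0 < R"
  unfolding R1_def using Bc_ge_24 gam_pos lam_pos alph_pos
  by (intro real_sqrt_gt_zero divide_pos_pos mult_pos_pos add_pos_pos) auto

lemma cc_nonneg: "0 \<le> c"
  using gam_pos Bc_ge_24 alph_pos LU_pos LW_nonneg LW_small lam_pos
  by (simp add: cc_def alph_def field_simps)

lemma cc_le: "c \<le> exp (- (1/8) * \<kappa>\<^sub>0 * R^2) / 14"
proof -
  have "min (1/2 - (LU + LW) / (2 * \<alpha>)) (2 * sqrt ((LU + LW) / (2 * pi * \<alpha>))) \<le> 1/2"
    using alph_pos LU_pos LW_nonneg by (intro min.coboundedI1) simp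
  then have "c \<le> 1/7 * (1/2) * exp (- (1/8) * \<kappa>\<^sub>0 * R^2)"
    unfolding cc_def by (intro min.coboundedI2 mult_right_mono) auto
  then show ?thesis by simp
qed

lemma eps_nonneg: "0 \<le> eps lam A At LU LW d"
  using cc_nonneg Bc_ge_24 by (simp add: eps_def)

lemma kappa0_nonneg: "0 \<le> \<kappa>\<^sub>0"
  using alph_pos LU_pos LW_nonneg by (simp add: kappa0_def add_nonneg_nonneg)

lemma eps_le_half: "eps lam A At LU LW d \<le> 1/2"
proof -
  have "exp (- (1/8) * \<kappa>\<^sub>0 * R^2) \<le> 1"
    using kappa0_nonneg by simp
  then have "c \<le> 1/14"
    using cc_le by linarith
  then show ?thesis
    using Bc_ge_24 by (simp add: eps_def field_simps)
qed

lemma CC_eq: "CC lam A At LU LW d = 7 * c"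
  using Bc_ge_24 by (simp add: CC_def eps_def)

lemma kappa_nonneg: "0 \<le> \<kappa>"
  using alph_pos LU_pos LW_nonneg eps_nonneg by (simp add: kappa_eps_def)

lemma kappa_gap: "48 \<le> \<kappa>\<^sub>0 - \<kappa>"
proof -
  define M where "M = max (1 / (2 * \<alpha>)) 1"
  have "\<kappa>\<^sub>0 - \<kappa> = 96 * M * (1 - eps lam A At LU LW d)"
    by (simp add: kappa0_def kappa_eps_def M_def algebra_simps)
  moreover have "96 * 1 * (1/2) \<le> 96 * M * (1 - eps lam A At LU LW d)"
    using eps_le_half by (intro mult_mono) (auto simp: M_def)
  ultimately show ?thesis by simp
qed

lemma CC_small: "CC lam A At LU LW d * R^2 < 4 * exp (- (1/8) * \<kappa> * R^2)"
proof -
  \<comment> \<open>\<open>\<kappa>\<^sub>0 \<ge> \<kappa> + 48\<close> gives \<open>c\<close> an extra factor \<open>exp (- 6 R\<^sup>2)\<close>, which absorbs \<open>R\<^sup>2\<close>\<close>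
  have "R^2 \<le> exp (6 * R^2)"
    using exp_ge_add_one_self[of "6 * R^2"] zero_le_power2[of R] by linarith
  then have decay: "R^2 * exp (- 6 * R^2) \<le> 1"
    by (simp add: exp_minus field_simps)
  have "(\<kappa> + 48) * R^2 \<le> \<kappa>\<^sub>0 * R^2"
    using kappa_gap by (intro mult_right_mono) auto
  then have gap: "exp (- (1/8) * \<kappa>\<^sub>0 * R^2) \<le> exp (- (1/8) * \<kappa> * R^2) * exp (- 6 * R^2)"
    unfolding exp_add[symmetric] exp_le_cancel_iff by (simp add: algebra_simps)
  have "CC lam A At LU LW d * R^2 \<le> exp (- (1/8) * \<kappa>\<^sub>0 * R^2) / 2 * R^2"
    unfolding CC_eq using cc_le by (intro mult_right_mono) auto
  also have "\<dots> \<le> exp (- (1/8) * \<kappa> * R^2) * exp (- 6 * R^2) / 2 * R^2"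
    using gap by (intro mult_right_mono divide_right_mono) auto
  also have "\<dots> = exp (- (1/8) * \<kappa> * R^2) / 2 * (R^2 * exp (- 6 * R^2))"
    by simp
  also have "\<dots> \<le> exp (- (1/8) * \<kappa> * R^2) / 2"
    using decay by (simp add: mult_left_le)
  also have "\<dots> < 4 * exp (- (1/8) * \<kappa> * R^2)"
    by simp
  finally show ?thesis .
qed

end

theorem lemma2p5:
  fixes U W :: "'a::euclidean_space \<Rightarrow> real"
    and GU GW :: "'a \<Rightarrow> 'a"
    and lam A At LU LW :: real
  assumes U_grad: "\<And>x. (U has_derivative (\<lambda>h. GU x \<bullet> h)) (at x)"
    and U_C1: "continuous_on UNIV GU"
    and W_grad: "\<And>x. (W has_derivative (\<lambda>h. GW x \<bullet> h)) (at x)"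
    and W_C1: "continuous_on UNIV GW"
    and A1_nonneg: "\<And>x. U x \<ge> 0"
    and A1_lam: "lam > 0" and A1_A: "A \<ge> 0"
    and A1: "\<And>x. (1/2) * (GU x \<bullet> x) \<ge> lam * (U x + (norm x)^2 / 4) - A"
    and A2_pos: "LU > 0"
    and A2: "\<And>x y. norm (GU x - GU y) \<le> LU * norm (x - y)"
    and A3_even: "\<And>x. W (- x) = W x"
    and A3_lip: "\<And>x y. norm (GW x - GW y) \<le> LW * norm (x - y)"
    and A3_small: "LW < lam / 8"
    and At_nonneg: "At \<ge> 0"
    and At_bound: "\<And>x. U x \<ge> lam / 6 * (norm x)^2 - At"
  defines "f \<equiv> ffun lam A At LU LW DIM('a)"
    and "r \<equiv> R1 lam A At LU DIM('a)"
  shows "(\<exists>f' f''. (\<forall>x\<in>{0<..<r}. (f has_real_derivative f' x) (at x)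
                                   \<and> (f' has_real_derivative f'' x) (at x))
                 \<and> continuous_on {0<..<r} f'')
       \<and> (f has_real_derivative 1) (at_right 0)
       \<and> (\<exists>D > 0. (f has_real_derivative D) (at_left r)
            \<and> (\<forall>s\<ge>0. min s r * D \<le> f s \<and> f s \<le> min s (f r) \<and> min s (f r) \<le> min s r))
       \<and> (\<forall>s\<ge>r. f s = f r)
       \<and> (\<forall>s\<ge>0. f s \<ge> 0)
       \<and> mono_on {0..} f
       \<and> concave_on {0..} f"
proof -
  obtain b :: 'a where "b \<in> Basis"
    using nonempty_Basis by blast
  then have "norm (GW b - GW 0) \<le> LW"
    using A3_lip[of b 0] by simp
  then have "0 \<le> LW"
    using norm_ge_zero order_trans by blast
  then interpret adm: admissible_constants lam A At LU LW "DIM('a)"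
    using A1_lam A1_A At_nonneg A2_pos A3_small by unfold_locales auto
  interpret gaussian_profile "kappa_eps lam A At LU LW DIM('a)" "CC lam A At LU LW DIM('a)" r
    using adm.kappa_nonneg adm.cc_nonneg adm.R1_pos adm.CC_small
    by unfold_locales (auto simp: adm.CC_eq r_def)
  have phi_eq: "phi lam A At LU LW DIM('a) = ph"
    by (simp add: fun_eq_iff phi_eq_exp ph_def)
  have f_eq: "f = F"
    unfolding fun_eq_iff f_def ffun_def gfun_def Phi_def phi_eq F_def psi_def g_def Ph_def
    by (simp add: r_def)
  have "min s r * psi r \<le> F s \<and> F s \<le> min s (F r) \<and> min s (F r) \<le> min s r"
    if "0 \<le> s" for s
    using F_bounds[OF that] F_le_min_F_R[OF that] F_bounds(2)[of r] R_pos by auto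
  moreover have "(\<forall>x\<in>{0<..<r}. (F has_real_derivative psi x) (at x)
                                   \<and> (psi has_real_derivative dpsi x) (at x))"
    using F_has_derivative_interior psi_has_derivative by auto
  ultimately show ?thesis
    unfolding f_eq
    using dpsi_continuous F_has_right_derivative_0 F_has_left_derivative_R h_R_pos F_const
      F_nonneg F_mono F_concave by blast
qed

end
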